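(* Let $D=\{(x_1,y_1),\dots,(x_N,y_N)\}$ be a training set with $N$ samples, fix a target index $i\in\{1,\dots,N\}$, and fix a sampling size $z$ with $1\le z< N$. Let $q_\theta(y\mid x,\tilde D)\in[0,1]$ be a fixed predictor satisfying the Fitting Assumption below. Let $w_1=(p^{w_1}_1,\dots,p^{w_1}_N)$ be uniform sampling weights, $p^{w_1}_a=p_0=\frac1N$ for all $a$. For a real number $k$ with $1<k<N$, let $\lambda=\frac{1-kp_0}{1-p_0}=\frac{N-k}{N-1}$ and define new weights $w_2$ by $p^{w_2}_i=k p_0$ and $p^{w_2}_j=\lambda p_0$ for all $j\neq i$ (so $w_2$ is normalized). Define $$\lambda_B=\lambda^z\,\frac{\prod_{a=1}^{z}\bigl(1-(a-1)p_0\bigr)}{\prod_{a=1}^{z}\bigl(1-(a-1)\lambda p_0\bigr)},$$ which satisfies $0<\lambda_B<1$. If $k>(N-z)(1-\lambda_B)+1$, then $$\mathbb{E}\bigl[q_{(\theta,w_2)}(y_i\mid x_i,D)\bigr]>\mathbb{E}\bigl[q_{(\theta,w_1)}(y_i\mid x_i,D)\bigr].$$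
   Context: Fitting Assumption: for every sample $(x_i,y_i)\in D$, every training set $\tilde D$ (a collection of labeled samples), and every other sample $(x_j,y_j)\in D$, $$q_\theta\bigl(y_i\mid x_i,\tilde D\cup\{(x_i,y_i)\}\bigr)>\max\Bigl[q_\theta(y_i\mid x_i,\tilde D),\;q_\theta\bigl(y_i\mid x_i,\tilde D\cup\{(x_j,y_j)\}\bigr)\Bigr].$$ Weighted non-replacement sampling: given normalized weights $w=(p_1,\dots,p_N)$ on the samples of $D$, a subset $D^z_w\subseteq D$ of size $z$ is drawn by selecting $z$ distinct samples sequentially, where at each step a not-yet-selected sample $a$ is chosen with probability $p_a/(1-\sum_{b\text{ already selected}}p_b)$. The sampled PFN predictor is $q_{(\theta,w)}(y\mid x,D)=q_\theta(y\mid x,D^z_w)$, and the expectation $\mathbb{E}[q_{(\theta,w)}(y_i\mid x_i,D)]=\sum_{S}\Pr(D^z_w=S)\,q_\theta(y_i\mid x_i,S)$ is over the random subset $D^z_w$. *)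

theory Defs
  imports Main Complex_Main
begin

text \<open>Samples have an abstract type 's. A predictor is modelled as
  q s T = q_theta(y_s | x_s, T) for a sample s and a training set T.\<close>

text \<open>Probability that weighted non-replacement sampling selects the
  samples in the order given by the (distinct) list xs.\<close>
definition seq_prob :: "('s \<Rightarrow> real) \<Rightarrow> 's list \<Rightarrow> real" where
  "seq_prob w xs = (\<Prod>t<length xs. w (xs ! t) / (1 - sum_list (map w (take t xs))))"

definition subset_prob :: "'s set \<Rightarrow> ('s \<Rightarrow> real) \<Rightarrow> nat \<Rightarrow> 's set \<Rightarrow> real" where
  "subset_prob D w z S =
     (\<Sum>xs\<in>{xs. set xs \<subseteq> D \<and> distinct xs \<and> length xs = z \<and> set xs = S}. seq_prob w xs)"

definition sampled_expectation ::
  "'s set \<Rightarrow> ('s \<Rightarrow> 's set \<Rightarrow> real) \<Rightarrow> ('s \<Rightarrow> real) \<Rightarrow> nat \<Rightarrow> 's \<Rightarrow> real" where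
  "sampled_expectation D q w z i =
     (\<Sum>S\<in>{S. S \<subseteq> D \<and> card S = z}. subset_prob D w z S * q i S)"

text \<open>Fitting Assumption (with the implicit side conditions that the other
  sample differs from s and that s is not already in the training set T).\<close>
definition fitting_assumption :: "'s set \<Rightarrow> ('s \<Rightarrow> 's set \<Rightarrow> real) \<Rightarrow> bool" where
  "fitting_assumption D q \<longleftrightarrow>
     (\<forall>s\<in>D. \<forall>T. \<forall>s'\<in>D. s' \<noteq> s \<and> s \<notin> T \<longrightarrow>
        q s (insert s T) > max (q s T) (q s (insert s' T)))"

end

theory Submission
  imports Defs "HOL-Combinatorics.Multiset_Permutations"
begin

text \<open>Under the uniform weights every z-subset has the same probability c. Under the tilted
  weights every z-subset avoiding i has one probability d < c, and by symmetry all z-subsets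
  containing i share one probability \<beta>; since both distributions have total mass 1, the mass
  (c - d)|A| lost by the family A of subsets avoiding i is moved onto the family B of subsets
  containing i. The expectation therefore increases as soon as the mean of q(y_i | x_i, S)
  over B exceeds its mean over A. This follows from the Fitting Assumption by double counting:
  exchanging a member j of S \<in> A for i is a bijection between the pairs (S, j) with S \<in> A,
  j \<in> S and the pairs (T, j) with T \<in> B, j \<notin> T, and it strictly increases q by the
  Fitting Assumption; there are z|A| = (N - z)|B| such pairs.\<close>

lemma seq_prob_snoc:
  "seq_prob w (xs @ [a]) = seq_prob w xs * (w a / (1 - sum_list (map w xs)))"
proof -
  have "(\<Prod>t<length xs. w ((xs @ [a]) ! t) / (1 - sum_list (map w (take t (xs @ [a])))))
      = seq_prob w xs"
    unfolding seq_prob_def by (rule prod.cong) (auto simp: nth_append)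
  then show ?thesis
    by (simp add: seq_prob_def prod.lessThan_Suc)
qed

lemma distinct_lists_Suc_eq:
  "{xs. set xs \<subseteq> D \<and> distinct xs \<and> length xs = Suc z} =
   (\<lambda>(xs, a). xs @ [a]) ` Sigma {xs. set xs \<subseteq> D \<and> distinct xs \<and> length xs = z} (\<lambda>xs. D - set xs)"
proof (rule set_eqI, rule iffI)
  fix ys assume ys: "ys \<in> {xs. set xs \<subseteq> D \<and> distinct xs \<and> length xs = Suc z}"
  then obtain xs a where "ys = xs @ [a]"
    by (metis (mono_tags, lifting) mem_Collect_eq Zero_not_Suc list.size(3) rev_exhaust)
  with ys show "ys \<in> (\<lambda>(xs, a). xs @ [a]) ` Sigma {xs. set xs \<subseteq> D \<and> distinct xs \<and> length xs = z} (\<lambda>xs. D - set xs)"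
    by (intro image_eqI[of _ _ "(xs, a)"]) auto
qed auto

lemma finite_distinct_lists_length:
  "finite D \<Longrightarrow> finite {xs. set xs \<subseteq> D \<and> distinct xs \<and> length xs = z}"
  by (rule finite_subset[OF _ finite_lists_length_eq[of D z]]) auto

lemma sum_seq_prob_eq_1:
  fixes w :: "'s \<Rightarrow> real"
  assumes "finite D" and w_pos: "\<And>a. a \<in> D \<Longrightarrow> w a > 0" and w_sum: "sum w D = 1"
    and "z \<le> card D"
  shows "(\<Sum>xs\<in>{xs. set xs \<subseteq> D \<and> distinct xs \<and> length xs = z}. seq_prob w xs) = 1"
  using \<open>z \<le> card D\<close>
proof (induction z)
  case 0
  have "{xs. set xs \<subseteq> D \<and> distinct xs \<and> length xs = 0} = {[]}" by auto
  then show ?case by (simp add: seq_prob_def)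
next
  case (Suc z)
  let ?L = "{xs. set xs \<subseteq> D \<and> distinct xs \<and> length xs = z}"
  have fin_L: "finite ?L"
    using \<open>finite D\<close> by (rule finite_distinct_lists_length)
  have inj: "inj_on (\<lambda>(xs, a). xs @ [a]) (Sigma ?L (\<lambda>xs. D - set xs))"
    by (auto simp: inj_on_def)
  have extend: "(\<Sum>a\<in>D - set xs. seq_prob w (xs @ [a])) = seq_prob w xs" if xs: "xs \<in> ?L" for xs
  proof -
    have rest: "sum w (D - set xs) = 1 - sum_list (map w xs)"
      using xs \<open>finite D\<close> w_sum by (simp add: sum_diff sum_list_distinct_conv_sum_set)
    have "card (set xs) < card D"
      using xs Suc.prems by (simp add: distinct_card)
    then have "D - set xs \<noteq> {}"
      by (metis Diff_eq_empty_iff List.finite_set card_mono leD)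
    then have "sum w (D - set xs) > 0"
      using \<open>finite D\<close> w_pos by (intro sum_pos) auto
    moreover have "(\<Sum>a\<in>D - set xs. seq_prob w (xs @ [a]))
        = seq_prob w xs * (sum w (D - set xs) / (1 - sum_list (map w xs)))"
      by (simp add: seq_prob_snoc sum_distrib_left sum_divide_distrib)
    ultimately show ?thesis
      using rest by simp
  qed
  have "(\<Sum>xs\<in>{xs. set xs \<subseteq> D \<and> distinct xs \<and> length xs = Suc z}. seq_prob w xs)
      = (\<Sum>(xs, a)\<in>Sigma ?L (\<lambda>xs. D - set xs). seq_prob w (xs @ [a]))"
    unfolding distinct_lists_Suc_eq by (subst sum.reindex[OF inj]) (simp add: case_prod_beta)
  also have "\<dots> = (\<Sum>xs\<in>?L. \<Sum>a\<in>D - set xs. seq_prob w (xs @ [a]))"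
    using fin_L \<open>finite D\<close> by (subst sum.Sigma) auto
  also have "\<dots> = (\<Sum>xs\<in>?L. seq_prob w xs)"
    using extend by simp
  finally show ?case
    using Suc by simp
qed

lemma sum_subset_prob_eq_1:
  fixes w :: "'s \<Rightarrow> real"
  assumes "finite D" "\<And>a. a \<in> D \<Longrightarrow> w a > 0" "sum w D = 1" "z \<le> card D"
  shows "(\<Sum>S\<in>{S. S \<subseteq> D \<and> card S = z}. subset_prob D w z S) = 1"
proof -
  let ?L = "{xs. set xs \<subseteq> D \<and> distinct xs \<and> length xs = z}"
  have fin_L: "finite ?L"
    using assms(1) by (rule finite_distinct_lists_length)
  have "set ` ?L \<subseteq> {S. S \<subseteq> D \<and> card S = z}"
    by (auto simp: distinct_card)
  then have "(\<Sum>S\<in>{S. S \<subseteq> D \<and> card S = z}. \<Sum>xs\<in>{xs \<in> ?L. set xs = S}. seq_prob w xs)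
      = (\<Sum>xs\<in>?L. seq_prob w xs)"
    using fin_L assms(1) by (intro sum.group) auto
  then show ?thesis
    using sum_seq_prob_eq_1[OF assms] by (simp add: subset_prob_def conj_assoc)
qed

lemma subset_prob_eq_sum_permutations:
  assumes "S \<subseteq> D" "card S = z" "finite S"
  shows "subset_prob D w z S = (\<Sum>xs\<in>permutations_of_set S. seq_prob w xs)"
proof -
  have "{xs. set xs \<subseteq> D \<and> distinct xs \<and> length xs = z \<and> set xs = S} = permutations_of_set S"
    using assms by (auto simp: permutations_of_set_def distinct_card)
  then show ?thesis by (simp add: subset_prob_def)
qed

text \<open>The probability of drawing a given z-set all of whose members have weight g (z! orders).
  The ratio uniform_subset_prob (lam * p0) z / uniform_subset_prob p0 z is the lamB of the
  statement.\<close>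

definition uniform_subset_prob :: "real \<Rightarrow> nat \<Rightarrow> real" where
  "uniform_subset_prob g z = fact z * (\<Prod>t<z. g / (1 - real t * g))"

lemma seq_prob_const:
  assumes "\<And>a. a \<in> set xs \<Longrightarrow> w a = g"
  shows "seq_prob w xs = (\<Prod>t<length xs. g / (1 - real t * g))"
  unfolding seq_prob_def
proof (rule prod.cong[OF refl])
  fix t assume t: "t \<in> {..<length xs}"
  have "map w (take t xs) = map (\<lambda>_. g) (take t xs)"
    using assms by (intro map_cong) (auto dest: in_set_takeD)
  also have "sum_list \<dots> = real t * g"
    using t by (simp add: sum_list_triv)
  finally have "sum_list (map w (take t xs)) = real t * g" .
  moreover have "w (xs ! t) = g" using t assms by simp
  ultimately show "w (xs ! t) / (1 - sum_list (map w (take t xs))) = g / (1 - real t * g)"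
    by simp
qed

lemma subset_prob_const:
  assumes "S \<subseteq> D" "card S = z" "finite S" "\<And>a. a \<in> S \<Longrightarrow> w a = g"
  shows "subset_prob D w z S = uniform_subset_prob g z"
proof -
  have "seq_prob w xs = (\<Prod>t<z. g / (1 - real t * g))" if "xs \<in> permutations_of_set S" for xs
    using that assms seq_prob_const[of xs w g]
    by (auto simp: permutations_of_set_def length_finite_permutations_of_set)
  then show ?thesis
    using assms by (simp add: subset_prob_eq_sum_permutations uniform_subset_prob_def)
qed

lemma uniform_subset_prob_strict_mono:
  assumes "0 < g'" "g' < g" "1 \<le> z" "real z * g \<le> 1"
  shows "uniform_subset_prob g' z < uniform_subset_prob g z"
proof -
  have denom: "0 < 1 - real t * g" "1 - real t * g \<le> 1 - real t * g'" if "t < z" for t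
  proof -
    have "real t * g < real z * g"
      using that assms by (simp add: mult_strict_right_mono)
    then show "0 < 1 - real t * g"
      using assms by linarith
    show "1 - real t * g \<le> 1 - real t * g'"
      using assms by (simp add: mult_left_mono)
  qed
  have "(\<Prod>t<z. g' / (1 - real t * g')) < (\<Prod>t<z. g / (1 - real t * g))"
  proof (rule prod_mono_strict[of 0])
    fix t assume "t \<in> {..<z}"
    with denom[of t] assms
    show "0 \<le> g' / (1 - real t * g') \<and> g' / (1 - real t * g') \<le> g / (1 - real t * g)"
      "0 < g / (1 - real t * g)"
      by (auto intro!: frac_le)
  qed (use assms in auto)
  then show ?thesis
    by (simp add: uniform_subset_prob_def)
qed

lemma seq_prob_map:
  assumes "\<And>a. a \<in> set xs \<Longrightarrow> w (f a) = w a"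
  shows "seq_prob w (map f xs) = seq_prob w xs"
proof -
  have "map w (take t (map f xs)) = map w (take t xs)" for t
    using assms by (auto simp: take_map dest: in_set_takeD)
  then show ?thesis
    using assms by (auto simp: seq_prob_def intro!: prod.cong)
qed

lemma subset_prob_bij_eq:
  assumes "S1 \<subseteq> D" "S2 \<subseteq> D" "card S1 = z" "finite S1" "bij_betw f S1 S2"
    and "\<And>a. a \<in> S1 \<Longrightarrow> w (f a) = w a"
  shows "subset_prob D w z S2 = subset_prob D w z S1"
proof -
  have inj: "inj_on f S1" and img: "f ` S1 = S2"
    using assms(5) by (auto simp: bij_betw_def)
  have "finite S2" "card S2 = z"
    using assms bij_betw_finite bij_betw_same_card by metis+
  have inj_map: "inj_on (map f) (permutations_of_set S1)"
    using inj by (intro inj_onI) (auto simp: permutations_of_set_def inj_on_map_eq_map)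
  have "subset_prob D w z S2 = (\<Sum>xs\<in>map f ` permutations_of_set S1. seq_prob w xs)"
    using subset_prob_eq_sum_permutations[OF assms(2) \<open>card S2 = z\<close> \<open>finite S2\<close>]
      permutations_of_set_image_inj[OF inj] img by simp
  also have "\<dots> = (\<Sum>xs\<in>permutations_of_set S1. seq_prob w (map f xs))"
    by (simp add: sum.reindex[OF inj_map])
  also have "\<dots> = (\<Sum>xs\<in>permutations_of_set S1. seq_prob w xs)"
    using assms(6) by (intro sum.cong refl seq_prob_map) (auto simp: permutations_of_set_def)
  also have "\<dots> = subset_prob D w z S1"
    using subset_prob_eq_sum_permutations[OF assms(1,3,4)] by simp
  finally show ?thesis .
qed

lemma subset_prob_const_on_subsets_with:
  assumes "finite D" "i \<in> D" and w_const: "\<And>a. a \<in> D \<Longrightarrow> a \<noteq> i \<Longrightarrow> w a = g"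
  obtains \<beta> where "\<And>S. S \<subseteq> D \<Longrightarrow> card S = z \<Longrightarrow> i \<in> S \<Longrightarrow> subset_prob D w z S = \<beta>"
proof (cases "\<exists>S0. S0 \<subseteq> D \<and> card S0 = z \<and> i \<in> S0")
  case True
  then obtain S0 where S0: "S0 \<subseteq> D" "card S0 = z" "i \<in> S0" by blast
  have "subset_prob D w z S = subset_prob D w z S0"
    if S: "S \<subseteq> D" "card S = z" "i \<in> S" for S
  proof -
    have fin: "finite S0" "finite S"
      using S0 S \<open>finite D\<close> finite_subset by blast+
    then obtain h where h: "bij_betw h (S0 - {i}) (S - {i})"
      using S0 S by (metis card_Diff_singleton finite_Diff finite_same_card_bij)
    define f where "f a = (if a = i then i else h a)" for a
    have "bij_betw f (S0 - {i}) (S - {i})"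
      using h bij_betw_cong[of "S0 - {i}" f h] by (simp add: f_def)
    then have "bij_betw f ((S0 - {i}) \<union> {i}) ((S - {i}) \<union> {i})"
      by (rule bij_betw_combine) (auto simp: f_def)
    then have "bij_betw f S0 S"
      using S0 S by (metis Un_insert_right insert_Diff sup_bot.right_neutral)
    moreover have "w (f a) = w a" if "a \<in> S0" for a
    proof (cases "a = i")
      case False
      then have "h a \<in> S - {i}"
        using that bij_betwE[OF h] by blast
      then show ?thesis
        using False that S0 S w_const by (auto simp: f_def)
    qed (simp add: f_def)
    ultimately show ?thesis
      using subset_prob_bij_eq S0 S fin by metis
  qed
  then show ?thesis using that by blast
qed (use that in blast)

lemma fitting_assumption_swap:
  assumes "fitting_assumption D q" "S \<subseteq> D" "i \<in> D" "i \<notin> S" "j \<in> S"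
  shows "q i S < q i (insert i (S - {j}))"
proof -
  have "q i (insert j (S - {j})) < q i (insert i (S - {j}))"
    using assms unfolding fitting_assumption_def by (metis (no_types, lifting) max_less_iff_conj
      DiffE singletonI subsetD)
  moreover have "insert j (S - {j}) = S"
    using assms(5) by blast
  ultimately show ?thesis by simp
qed

lemma card_insert_Diff_singleton:
  assumes "finite S" "b \<in> S" "a \<notin> S - {b}"
  shows "card (insert a (S - {b})) = card S"
  using assms by (metis card.remove card_insert_disjoint finite_Diff)

lemma sum_exchange_member_for_target:
  assumes "finite D" "i \<in> D"
  shows "(\<Sum>(S, j)\<in>Sigma {S. S \<subseteq> D \<and> card S = z \<and> i \<notin> S} (\<lambda>S. S). F (insert i (S - {j})))
       = (\<Sum>(S, j)\<in>Sigma {S. S \<subseteq> D \<and> card S = z \<and> i \<in> S} (\<lambda>S. D - S). F S)"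
proof (rule sum.reindex_bij_witness[where i="\<lambda>(S, j). (insert j (S - {i}), j)"
                                     and j="\<lambda>(S, j). (insert i (S - {j}), j)"])
  fix p assume "p \<in> Sigma {S. S \<subseteq> D \<and> card S = z \<and> i \<notin> S} (\<lambda>S. S)"
  then obtain S j where p: "p = (S, j)" "S \<subseteq> D" "card S = z" "i \<notin> S" "j \<in> S"
    by auto
  then have "finite S" using assms(1) finite_subset by blast
  then show "(\<lambda>(S, j). (insert j (S - {i}), j)) ((\<lambda>(S, j). (insert i (S - {j}), j)) p) = p"
    "(\<lambda>(S, j). (insert i (S - {j}), j)) p \<in> Sigma {S. S \<subseteq> D \<and> card S = z \<and> i \<in> S} (\<lambda>S. D - S)"
    "(case (\<lambda>(S, j). (insert i (S - {j}), j)) p of (S, j) \<Rightarrow> F S) = (case p of (S, j) \<Rightarrow> F (insert i (S - {j})))"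
    using p assms card_insert_Diff_singleton[of S j i] by auto
next
  fix p assume "p \<in> Sigma {S. S \<subseteq> D \<and> card S = z \<and> i \<in> S} (\<lambda>S. D - S)"
  then obtain S j where p: "p = (S, j)" "S \<subseteq> D" "card S = z" "i \<in> S" "j \<in> D" "j \<notin> S"
    by auto
  then have "finite S" using assms(1) finite_subset by blast
  then show "(\<lambda>(S, j). (insert i (S - {j}), j)) ((\<lambda>(S, j). (insert j (S - {i}), j)) p) = p"
    "(\<lambda>(S, j). (insert j (S - {i}), j)) p \<in> Sigma {S. S \<subseteq> D \<and> card S = z \<and> i \<notin> S} (\<lambda>S. S)"
    using p card_insert_Diff_singleton[of S i j] by auto
qed

lemma sum_subsets_without_target_exchange:
  fixes F :: "'s set \<Rightarrow> real"
  assumes "finite D" "i \<in> D"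
  shows "(\<Sum>S\<in>{S. S \<subseteq> D \<and> card S = z \<and> i \<notin> S}. \<Sum>j\<in>S. F (insert i (S - {j})))
       = real (card D - z) * (\<Sum>S\<in>{S. S \<subseteq> D \<and> card S = z \<and> i \<in> S}. F S)"
proof -
  let ?A = "{S. S \<subseteq> D \<and> card S = z \<and> i \<notin> S}" and ?B = "{S. S \<subseteq> D \<and> card S = z \<and> i \<in> S}"
  have fin: "finite ?A" "finite ?B" "\<And>S. S \<subseteq> D \<Longrightarrow> finite S"
    using assms(1) finite_subset by auto
  have "(\<Sum>S\<in>?A. \<Sum>j\<in>S. F (insert i (S - {j}))) = (\<Sum>(S, j)\<in>Sigma ?A (\<lambda>S. S). F (insert i (S - {j})))"
    using fin by (subst sum.Sigma) auto
  also have "\<dots> = (\<Sum>(S, j)\<in>Sigma ?B (\<lambda>S. D - S). F S)"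
    by (rule sum_exchange_member_for_target[OF assms])
  also have "\<dots> = (\<Sum>S\<in>?B. \<Sum>j\<in>D - S. F S)"
    using fin assms(1) by (subst sum.Sigma) auto
  also have "\<dots> = (\<Sum>S\<in>?B. real (card D - z) * F S)"
    using fin by (intro sum.cong refl) (auto simp: card_Diff_subset)
  finally show ?thesis
    by (simp add: sum_distrib_left)
qed

lemma card_subsets_without_target:
  assumes "finite D" "i \<in> D"
  shows "real z * card {S. S \<subseteq> D \<and> card S = z \<and> i \<notin> S}
       = real (card D - z) * card {S. S \<subseteq> D \<and> card S = z \<and> i \<in> S}"
proof -
  have "(\<Sum>S\<in>{S. S \<subseteq> D \<and> card S = z \<and> i \<notin> S}. \<Sum>j\<in>S. 1::real)
      = card {S. S \<subseteq> D \<and> card S = z \<and> i \<notin> S} * real z"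
    using assms(1) finite_subset by simp
  then show ?thesis
    using sum_subsets_without_target_exchange[OF assms, where z=z and F="\<lambda>_. 1"]
    by (simp add: mult.commute)
qed

lemma mean_over_subsets_with_target_greater:
  assumes "finite D" "i \<in> D" "1 \<le> z" "z < card D" "fitting_assumption D q"
  defines "A \<equiv> {S. S \<subseteq> D \<and> card S = z \<and> i \<notin> S}"
    and "B \<equiv> {S. S \<subseteq> D \<and> card S = z \<and> i \<in> S}"
  shows "card B > 0" and "(\<Sum>S\<in>A. q i S) * card B < (\<Sum>S\<in>B. q i S) * card A"
proof -
  have fin_A: "finite A" and fin_S: "\<And>S. S \<in> A \<Longrightarrow> finite S"
    using assms(1) finite_subset by (auto simp: A_def)
  have "z \<le> card (D - {i})"
    using assms(1,2,4) by simp
  then obtain S1 where "S1 \<subseteq> D - {i}" "card S1 = z"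
    by (meson obtain_subset_with_card_n)
  then have "S1 \<in> A" by (auto simp: A_def)
  then have A_pos: "card A > 0"
    using fin_A card_gt_0_iff by blast
  have count: "real z * card A = real (card D - z) * card B"
    unfolding A_def B_def by (rule card_subsets_without_target[OF assms(1,2)])
  then show B_pos: "card B > 0"
    using A_pos assms(3) by (cases "card B = 0") auto
  have "real z * (\<Sum>S\<in>A. q i S) = (\<Sum>S\<in>A. \<Sum>j\<in>S. q i S)"
    using fin_S by (simp add: A_def sum_distrib_left)
  also have "\<dots> < (\<Sum>S\<in>A. \<Sum>j\<in>S. q i (insert i (S - {j})))"
  proof (rule sum_strict_mono)
    fix S assume S: "S \<in> A"
    then have "S \<noteq> {}"
      using assms(3) by (auto simp: A_def)
    show "(\<Sum>j\<in>S. q i S) < (\<Sum>j\<in>S. q i (insert i (S - {j})))"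
    proof (rule sum_strict_mono)
      fix j assume "j \<in> S"
      then show "q i S < q i (insert i (S - {j}))"
        using S assms(2,5) by (intro fitting_assumption_swap) (auto simp: A_def)
    qed (use fin_S S \<open>S \<noteq> {}\<close> in auto)
  qed (use fin_A \<open>S1 \<in> A\<close> in auto)
  also have "\<dots> = real (card D - z) * (\<Sum>S\<in>B. q i S)"
    unfolding A_def B_def by (rule sum_subsets_without_target_exchange[OF assms(1,2)])
  finally have "real z * (\<Sum>S\<in>A. q i S) * card B < real (card D - z) * (\<Sum>S\<in>B. q i S) * card B"
    using B_pos by (intro mult_strict_right_mono) auto
  also have "\<dots> = (\<Sum>S\<in>B. q i S) * (real (card D - z) * card B)"
    by (simp only: ac_simps)
  also have "\<dots> = real z * ((\<Sum>S\<in>B. q i S) * card A)"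
    by (simp only: count[symmetric] mult.left_commute)
  finally show "(\<Sum>S\<in>A. q i S) * card B < (\<Sum>S\<in>B. q i S) * card A"
    using assms(3) by simp
qed

lemma weighted_sum_increases_under_mass_shift:
  fixes a b c d \<beta> x y :: real
  assumes "c * a + c * b = d * a + \<beta> * b" "d < c" "0 < b" "x * b < y * a"
  shows "c * x + c * y < d * x + \<beta> * y"
proof -
  have shift: "(\<beta> - c) * b = (c - d) * a"
    using assms(1) by (simp add: algebra_simps)
  have "b * ((d * x + \<beta> * y) - (c * x + c * y)) = ((\<beta> - c) * b) * y - (c - d) * b * x"
    by (simp add: algebra_simps)
  also have "\<dots> = (c - d) * (y * a - x * b)"
    unfolding shift by (simp add: algebra_simps)
  also have "\<dots> > 0"
    using assms(2,4) by simp
  finally show ?thesis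
    using assms(3) by (simp add: zero_less_mult_iff)
qed

lemma sampled_expectation_less_if_mass_moves_to_target:
  assumes "finite D" "i \<in> D" "1 \<le> z" "z < card D" "fitting_assumption D q"
    and total: "(\<Sum>S\<in>{S. S \<subseteq> D \<and> card S = z}. subset_prob D w z S) = 1"
      "(\<Sum>S\<in>{S. S \<subseteq> D \<and> card S = z}. subset_prob D w' z S) = 1"
    and prob_w: "\<And>S. S \<subseteq> D \<Longrightarrow> card S = z \<Longrightarrow> subset_prob D w z S = c"
    and prob_w'_without: "\<And>S. S \<subseteq> D \<Longrightarrow> card S = z \<Longrightarrow> i \<notin> S \<Longrightarrow> subset_prob D w' z S = d"
    and prob_w'_with: "\<And>S. S \<subseteq> D \<Longrightarrow> card S = z \<Longrightarrow> i \<in> S \<Longrightarrow> subset_prob D w' z S = \<beta>"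
    and "d < c"
  shows "sampled_expectation D q w z i < sampled_expectation D q w' z i"
proof -
  define A where "A = {S. S \<subseteq> D \<and> card S = z \<and> i \<notin> S}"
  define B where "B = {S. S \<subseteq> D \<and> card S = z \<and> i \<in> S}"
  have split: "(\<Sum>S\<in>{S. S \<subseteq> D \<and> card S = z}. f S) = (\<Sum>S\<in>A. f S) + (\<Sum>S\<in>B. f S)"
    for f :: "_ set \<Rightarrow> real"
  proof -
    have "{S. S \<subseteq> D \<and> card S = z} = A \<union> B" "A \<inter> B = {}" "finite A" "finite B"
      using assms(1) by (auto simp: A_def B_def)
    then show ?thesis by (simp add: sum.union_disjoint)
  qed
  have on_A: "subset_prob D w z S = c" "subset_prob D w' z S = d" if "S \<in> A" for S
    using that prob_w prob_w'_without by (auto simp: A_def)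
  have on_B: "subset_prob D w z S = c" "subset_prob D w' z S = \<beta>" if "S \<in> B" for S
    using that prob_w prob_w'_with by (auto simp: B_def)
  have mass: "c * card A + c * card B = d * card A + \<beta> * card B"
    using total split[of "subset_prob D w z"] split[of "subset_prob D w' z"] on_A on_B
    by (simp add: mult.commute)
  have "card B > 0" "(\<Sum>S\<in>A. q i S) * card B < (\<Sum>S\<in>B. q i S) * card A"
    unfolding A_def B_def by (fact mean_over_subsets_with_target_greater[OF assms(1-5)])+
  then have "c * (\<Sum>S\<in>A. q i S) + c * (\<Sum>S\<in>B. q i S) < d * (\<Sum>S\<in>A. q i S) + \<beta> * (\<Sum>S\<in>B. q i S)"
    using mass \<open>d < c\<close> by (intro weighted_sum_increases_under_mass_shift) auto
  moreover have "sampled_expectation D q w z i = c * (\<Sum>S\<in>A. q i S) + c * (\<Sum>S\<in>B. q i S)"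
    "sampled_expectation D q w' z i = d * (\<Sum>S\<in>A. q i S) + \<beta> * (\<Sum>S\<in>B. q i S)"
    unfolding sampled_expectation_def split using on_A on_B by (simp_all add: sum_distrib_left)
  ultimately show ?thesis
    by simp
qed

lemma sum_tilted_weights:
  assumes "finite D" "i \<in> D" "real (card D) * p0 = 1" "p0 \<noteq> 1"
  shows "(\<Sum>a\<in>D. if a = i then k * p0 else (1 - k * p0) / (1 - p0) * p0) = 1"
proof -
  have "card D \<ge> 1"
    using assms(1,2) by (metis One_nat_def Suc_leI card_gt_0_iff empty_iff)
  then have "real (card D - 1) * p0 = 1 - p0"
    using assms(3) by (simp add: of_nat_diff algebra_simps)
  then have "real (card D - 1) * ((1 - k * p0) / (1 - p0) * p0) = (1 - k * p0) / (1 - p0) * (1 - p0)"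
    by (metis mult.left_commute mult.commute)
  then have "real (card D - 1) * ((1 - k * p0) / (1 - p0) * p0) = 1 - k * p0"
    using assms(4) by simp
  moreover have "(\<Sum>a\<in>D - {i}. if a = i then k * p0 else (1 - k * p0) / (1 - p0) * p0)
      = real (card D - 1) * ((1 - k * p0) / (1 - p0) * p0)"
    using assms(1,2) by simp
  ultimately show ?thesis
    using assms(1,2) by (simp add: sum.remove[of D i])
qed

theorem lemma1:
  fixes D :: "'s set" and N z :: nat and i :: 's
    and q :: "'s \<Rightarrow> 's set \<Rightarrow> real" and k :: real
  assumes "finite D" and "card D = N" and "i \<in> D"
    and "1 \<le> z" and "z < N"
    and "\<And>s T. 0 \<le> q s T \<and> q s T \<le> 1"
    and "fitting_assumption D q"
    and "1 < k" and "k < real N"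
  defines "p0 \<equiv> 1 / real N"
  defines "lam \<equiv> (1 - k * p0) / (1 - p0)"
  defines "w1 \<equiv> (\<lambda>a::'s. p0)"
  defines "w2 \<equiv> (\<lambda>a::'s. if a = i then k * p0 else lam * p0)"
  defines "lamB \<equiv> lam ^ z * (\<Prod>a=1..z. 1 - (real a - 1) * p0) / (\<Prod>a=1..z. 1 - (real a - 1) * lam * p0)"
  assumes "k > real (N - z) * (1 - lamB) + 1"
  shows "sampled_expectation D q w2 z i > sampled_expectation D q w1 z i"
proof -
  have p0: "0 < p0" "p0 < 1" "real N * p0 = 1"
    using assms(4,5) by (auto simp: p0_def)
  then have "k * p0 < 1" "real z * p0 < 1"
    using assms(5,9) by (metis mult_strict_right_mono of_nat_less_iff)+
  then have lam: "0 < lam" "lam < 1"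
    using p0 assms(8) by (auto simp: lam_def)
  have w1: "\<And>a. w1 a > 0" "sum w1 D = 1"
    using p0 assms(2) by (auto simp: w1_def)
  have w2_pos: "\<And>a. w2 a > 0"
    using p0 lam assms(8) by (simp add: w2_def)
  have w2_sum: "sum w2 D = 1"
    unfolding w2_def lam_def using p0 assms(1-3) by (intro sum_tilted_weights) auto
  obtain \<beta> where prob_w2_with: "\<And>S. S \<subseteq> D \<Longrightarrow> card S = z \<Longrightarrow> i \<in> S \<Longrightarrow> subset_prob D w2 z S = \<beta>"
    using subset_prob_const_on_subsets_with[OF assms(1,3), where w=w2 and g="lam * p0" and z=z]
    by (auto simp: w2_def)
  have prob_w1: "\<And>S. S \<subseteq> D \<Longrightarrow> card S = z \<Longrightarrow> subset_prob D w1 z S = uniform_subset_prob p0 z"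
    using assms(1) by (intro subset_prob_const) (auto simp: w1_def intro: finite_subset)
  have prob_w2_without: "\<And>S. S \<subseteq> D \<Longrightarrow> card S = z \<Longrightarrow> i \<notin> S \<Longrightarrow>
      subset_prob D w2 z S = uniform_subset_prob (lam * p0) z"
    using assms(1) by (intro subset_prob_const) (auto simp: w2_def intro: finite_subset)
  have "uniform_subset_prob (lam * p0) z < uniform_subset_prob p0 z"
    using p0 lam assms(4) \<open>real z * p0 < 1\<close> by (intro uniform_subset_prob_strict_mono) auto
  moreover have "z < card D" "z \<le> card D"
    using assms(2,5) by simp_all
  ultimately show ?thesis
    using sampled_expectation_less_if_mass_moves_to_target[OF assms(1,3,4) _ assms(7)
        sum_subset_prob_eq_1[OF assms(1) w1] sum_subset_prob_eq_1[OF assms(1) w2_pos w2_sum]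
        prob_w1 prob_w2_without prob_w2_with]
    by blast
qed

end
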